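(* Let $1\le p<\infty$, $N\ge2$, and let $T_i=T_{f_i,\omega^{(i)}}$ ($1\le i\le N$) be unilateral pseudo-shifts on $\ell^p(\mathbb{N})$. If $f_i=f_\ell$ for some $i\ne\ell$, then $T_1,\dots,T_N$ fail to satisfy the Disjoint Hypercyclicity Criterion. In particular, unilateral weighted backward shifts $T_1,\dots,T_N$ on $\ell^p(\mathbb{N})$ never satisfy the Disjoint Hypercyclicity Criterion.
   Context: $\{e_m\}$ is the canonical basis of $\ell^p(\mathbb{N})$ over $\mathbb{K}\in\{\mathbb{R},\mathbb{C}\}$. For a strictly increasing $f:\mathbb{N}\to\mathbb{N}$ with $f(1)>1$ and a bounded, nonzero sequence of scalars $\omega=(w_{f(m)})_{m}$, the pseudo-shift is $T_{f,\omega}(\sum_m\alpha_me_m)=\sum_mw_{f(m)}\alpha_{f(m)}e_m$. A unilateral weighted backward shift with bounded weight sequence $(w_m)$ is $Te_m=w_me_{m-1}$ for $m\ge2$, $Te_1=0$ (the pseudo-shift with $f(m)=m+1$). Operators $T_1,\dots,T_N$ on $X$ satisfy the Disjoint Hypercyclicity Criterion if there exist a strictly increasing sequence $(n_k)$, dense subsets $X_0,\dots,X_N$ of $X$ and maps $S_{j,k}:X_j\to X$ with: $T_i^{n_k}\to0$ pointwise on $X_0$; $S_{j,k}\to0$ pointwise on $X_j$; $T_i^{n_k}S_{j,k}-\delta_{i,j}\mathrm{Id}\to0$ pointwise on $X_j$, for all $1\le i,j\le N$. *)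

theory Defs
  imports "HOL-Analysis.Analysis"
begin

text \<open>Sequences are indexed by nat = {0,1,2,...}; paper index m corresponds to m-1 here.
The scalar field is any real_normed_field (i.e. the reals or the complex numbers).\<close>

definition lp :: "real \<Rightarrow> (nat \<Rightarrow> 'a::real_normed_field) set" where
  "lp p = {x. summable (\<lambda>n. norm (x n) powr p)}"

definition lpnorm :: "real \<Rightarrow> (nat \<Rightarrow> 'a::real_normed_field) \<Rightarrow> real" where
  "lpnorm p x = (\<Sum>n. norm (x n) powr p) powr (1 / p)"

definition lp_dense :: "real \<Rightarrow> (nat \<Rightarrow> 'a::real_normed_field) set \<Rightarrow> bool" where
  "lp_dense p D \<longleftrightarrow> D \<subseteq> lp p \<and>
     (\<forall>x\<in>lp p. \<forall>\<epsilon>>0. \<exists>y\<in>D. lpnorm p (\<lambda>n. x n - y n) < \<epsilon>)"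

text \<open>Pseudo-shift data (0-based): f strictly increasing with f 0 > 0 (paper: f(1) > 1),
weights bounded and nonzero; w m plays the role of the paper's w_{f(m)}.\<close>
definition pseudo_shift_data :: "(nat \<Rightarrow> nat) \<Rightarrow> (nat \<Rightarrow> 'a::real_normed_field) \<Rightarrow> bool" where
  "pseudo_shift_data f w \<longleftrightarrow> strict_mono f \<and> f 0 > 0 \<and> bounded (range w) \<and> (\<forall>m. w m \<noteq> 0)"

definition pseudo_shift :: "(nat \<Rightarrow> nat) \<Rightarrow> (nat \<Rightarrow> 'a::real_normed_field) \<Rightarrow> (nat \<Rightarrow> 'a) \<Rightarrow> (nat \<Rightarrow> 'a)" where
  "pseudo_shift f w x = (\<lambda>m. w m * x (f m))"

definition backward_shift :: "(nat \<Rightarrow> 'a::real_normed_field) \<Rightarrow> (nat \<Rightarrow> 'a) \<Rightarrow> (nat \<Rightarrow> 'a)" where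
  "backward_shift v x = (\<lambda>n. v n * x (Suc n))"

definition DHC :: "real \<Rightarrow> nat \<Rightarrow> (nat \<Rightarrow> (nat \<Rightarrow> 'a::real_normed_field) \<Rightarrow> (nat \<Rightarrow> 'a)) \<Rightarrow> bool" where
  "DHC p N T \<longleftrightarrow> (\<exists>(nk::nat \<Rightarrow> nat) (X::nat \<Rightarrow> (nat \<Rightarrow> 'a) set)
       (S::nat \<Rightarrow> nat \<Rightarrow> (nat \<Rightarrow> 'a) \<Rightarrow> (nat \<Rightarrow> 'a)).
     strict_mono nk \<and>
     (\<forall>j\<le>N. lp_dense p (X j)) \<and>
     (\<forall>j\<in>{1..N}. \<forall>k. \<forall>x\<in>X j. S j k x \<in> lp p) \<and>
     (\<forall>i\<in>{1..N}. \<forall>x\<in>X 0. (\<lambda>k. lpnorm p ((T i ^^ nk k) x)) \<longlonglongrightarrow> 0) \<and>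
     (\<forall>j\<in>{1..N}. \<forall>x\<in>X j. (\<lambda>k. lpnorm p (S j k x)) \<longlonglongrightarrow> 0) \<and>
     (\<forall>i\<in>{1..N}. \<forall>j\<in>{1..N}. \<forall>x\<in>X j.
        (\<lambda>k. lpnorm p (\<lambda>n. (T i ^^ nk k) (S j k x) n - (if i = j then x n else 0))) \<longlonglongrightarrow> 0))"

end

theory Submission
  imports Defs
begin

text \<open>If \<open>T\<^sub>i\<close> and \<open>T\<^sub>l\<close> share the index map \<open>f\<close>, then
\<open>(T\<^sub>i\<^sup>n y) 0 = A\<^sub>n \<cdot> y (f\<^sup>n 0)\<close> and \<open>(T\<^sub>l\<^sup>n y) 0 = B\<^sub>n \<cdot> y (f\<^sup>n 0)\<close>
with coefficients independent of \<open>y\<close>, so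
\<open>(T\<^sub>i\<^sup>n u) 0 \<cdot> (T\<^sub>l\<^sup>n v) 0 = (T\<^sub>l\<^sup>n u) 0 \<cdot> (T\<^sub>i\<^sup>n v) 0\<close> for all \<open>u, v\<close>.
Convergence in \<open>\<ell>\<^sup>p\<close> implies convergence of coordinates, so for
\<open>u = S\<^sub>i\<^sub>,\<^sub>k x\<close> and \<open>v = S\<^sub>l\<^sub>,\<^sub>k z\<close> the criterion sends the left-hand side to
\<open>x 0 \<cdot> z 0\<close> and the right-hand side to \<open>0\<close>. By density, \<open>x \<in> X\<^sub>i\<close> and \<open>z \<in> X\<^sub>l\<close> can be
chosen with \<open>x 0 \<noteq> 0 \<noteq> z 0\<close>, a contradiction. Backward shifts are the pseudo-shifts
with \<open>f = Suc\<close>.\<close>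

lemma norm_le_lpnorm:
  fixes z :: "nat \<Rightarrow> 'a::real_normed_field"
  assumes "z \<in> lp p" "p > 0"
  shows "norm (z m) \<le> lpnorm p z"
proof -
  have "norm (z m) powr p \<le> (\<Sum>n. norm (z n) powr p)"
    using sum_le_suminf[of "\<lambda>n. norm (z n) powr p" "{m}"] assms(1) by (simp add: lp_def)
  then have "(norm (z m) powr p) powr (1/p) \<le> (\<Sum>n. norm (z n) powr p) powr (1/p)"
    using assms(2) by (intro powr_mono2) auto
  then show ?thesis
    using assms(2) by (simp add: lpnorm_def powr_powr)
qed

lemma lp_diff:
  fixes x y :: "nat \<Rightarrow> 'a::real_normed_field"
  assumes "x \<in> lp p" "y \<in> lp p" "p > 0"
  shows "(\<lambda>n. x n - y n) \<in> lp p"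
proof -
  have bound: "norm (x n - y n) powr p \<le> 2 powr p * (norm (x n) powr p + norm (y n) powr p)" for n
  proof -
    have "norm (x n - y n) \<le> 2 * max (norm (x n)) (norm (y n))"
      using norm_triangle_ineq4[of "x n" "y n"] by linarith
    then have "norm (x n - y n) powr p \<le> (2 * max (norm (x n)) (norm (y n))) powr p"
      using assms(3) by (intro powr_mono2) auto
    also have "\<dots> = 2 powr p * max (norm (x n)) (norm (y n)) powr p"
      by (simp add: powr_mult)
    also have "\<dots> \<le> 2 powr p * (norm (x n) powr p + norm (y n) powr p)"
      by (intro mult_left_mono) (auto simp: max_def)
    finally show ?thesis .
  qed
  have "summable (\<lambda>n. 2 powr p * (norm (x n) powr p + norm (y n) powr p))"
    using assms(1,2) by (intro summable_mult summable_add) (auto simp: lp_def)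
  then have "summable (\<lambda>n. norm (x n - y n) powr p)"
    by (rule summable_comparison_test') (simp add: bound)
  then show ?thesis
    by (simp add: lp_def)
qed

lemma pseudo_shift_in_lp:
  fixes x :: "nat \<Rightarrow> 'a::real_normed_field"
  assumes "x \<in> lp p" "p > 0" "inj f" "bounded (range w)"
  shows "pseudo_shift f w x \<in> lp p"
proof -
  have sx: "summable (\<lambda>n. norm (x n) powr p)"
    using assms(1) by (simp add: lp_def)
  obtain B where B: "\<And>m. norm (w m) \<le> B"
    using assms(4) unfolding bounded_iff by blast
  have "summable (\<lambda>m. norm (x (f m)) powr p)"
  proof (rule summableI_nonneg_bounded)
    fix n
    have "(\<Sum>m<n. norm (x (f m)) powr p) = (\<Sum>k\<in>f ` {..<n}. norm (x k) powr p)"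
      using assms(3) by (simp add: sum.reindex inj_on_subset)
    also have "\<dots> \<le> (\<Sum>k. norm (x k) powr p)"
      using sx by (rule sum_le_suminf) auto
    finally show "(\<Sum>m<n. norm (x (f m)) powr p) \<le> (\<Sum>k. norm (x k) powr p)" .
  qed simp
  then have "summable (\<lambda>m. B powr p * norm (x (f m)) powr p)"
    by (rule summable_mult)
  moreover have "norm (norm (w m * x (f m)) powr p) \<le> B powr p * norm (x (f m)) powr p" for m
  proof -
    have "norm (norm (w m * x (f m)) powr p) = norm (w m) powr p * norm (x (f m)) powr p"
      by (simp add: norm_mult powr_mult)
    also have "\<dots> \<le> B powr p * norm (x (f m)) powr p"
      using B assms(2) by (simp add: mult_right_mono powr_mono2)
    finally show ?thesis .
  qed
  ultimately have "summable (\<lambda>m. norm (w m * x (f m)) powr p)"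
    by (rule summable_comparison_test')
  then show ?thesis
    by (simp add: lp_def pseudo_shift_def)
qed

lemma funpow_pseudo_shift_apply:
  "(pseudo_shift f w ^^ n) x m = (\<Prod>j<n. w ((f ^^ j) m)) * x ((f ^^ n) m)"
proof (induction n arbitrary: m)
  case 0
  then show ?case by simp
next
  case (Suc n)
  have "(pseudo_shift f w ^^ Suc n) x m = w m * (pseudo_shift f w ^^ n) x (f m)"
    by (simp add: pseudo_shift_def)
  also have "\<dots> = w m * ((\<Prod>j<n. w ((f ^^ Suc j) m)) * x ((f ^^ Suc n) m))"
    by (simp only: Suc.IH funpow_Suc_right comp_apply)
  also have "\<dots> = (\<Prod>j<Suc n. w ((f ^^ j) m)) * x ((f ^^ Suc n) m)"
    by (simp only: prod.lessThan_Suc_shift funpow_0 mult.assoc)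
  finally show ?case .
qed

lemma funpow_pseudo_shift_cross:
  "(pseudo_shift f a ^^ n) x m * (pseudo_shift f b ^^ n) z m
     = (pseudo_shift f b ^^ n) x m * (pseudo_shift f a ^^ n) z m"
  by (simp add: funpow_pseudo_shift_apply mult_ac)

lemma lp_dense_obtain_nonzero:
  fixes D :: "(nat \<Rightarrow> 'a::real_normed_field) set"
  assumes "lp_dense p D" "p > 0"
  obtains x where "x \<in> D" "x m \<noteq> 0"
proof -
  define e :: "nat \<Rightarrow> 'a" where "e n = (if n = m then 1 else 0)" for n
  have "summable (\<lambda>n. norm (e n) powr p)"
    by (rule summable_finite[of "{m}"]) (auto simp: e_def)
  then have e: "e \<in> lp p"
    by (simp add: lp_def)
  with assms(1) obtain y where y: "y \<in> D" "lpnorm p (\<lambda>n. e n - y n) < 1"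
    unfolding lp_dense_def by (meson zero_less_one)
  have "(\<lambda>n. e n - y n) \<in> lp p"
    using y(1) assms e lp_diff unfolding lp_dense_def by blast
  then have "norm (1 - y m) < 1"
    using norm_le_lpnorm[of "\<lambda>n. e n - y n" p m] y(2) assms(2) by (simp add: e_def)
  then have "y m \<noteq> 0"
    by auto
  with y(1) show ?thesis
    by (rule that)
qed

lemma tendsto_coordinate_if_lpnorm_tendsto_0:
  fixes h :: "nat \<Rightarrow> nat \<Rightarrow> 'a::real_normed_field"
  assumes "(\<lambda>k. lpnorm p (h k)) \<longlonglongrightarrow> 0" "\<And>k. h k \<in> lp p" "p > 0"
  shows "(\<lambda>k. h k m) \<longlonglongrightarrow> 0"
proof (rule Lim_null_comparison[OF _ assms(1)])
  show "\<forall>\<^sub>F k in sequentially. norm (h k m) \<le> lpnorm p (h k)"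
    using norm_le_lpnorm assms(2,3) by (intro always_eventually) blast
qed

lemma DHC_imp_coordinatewise:
  assumes "DHC p N T" "p > 0"
  obtains X nk S where "\<forall>j\<in>{1..N}. lp_dense p (X j)"
    and "\<And>i j x m. i \<in> {1..N} \<Longrightarrow> j \<in> {1..N} \<Longrightarrow> x \<in> X j \<Longrightarrow> \<forall>y\<in>lp p. T i y \<in> lp p \<Longrightarrow>
           (\<lambda>k. (T i ^^ nk k) (S j k x) m) \<longlonglongrightarrow> (if i = j then x m else 0)"
proof -
  obtain nk X S where
    dense: "\<forall>j\<le>N. lp_dense p (X j)" and
    S_lp: "\<forall>j\<in>{1..N}. \<forall>k. \<forall>x\<in>X j. S j k x \<in> lp p" and
    conv: "\<forall>i\<in>{1..N}. \<forall>j\<in>{1..N}. \<forall>x\<in>X j.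
        (\<lambda>k. lpnorm p (\<lambda>n. (T i ^^ nk k) (S j k x) n - (if i = j then x n else 0))) \<longlonglongrightarrow> 0"
    using assms(1) unfolding DHC_def by blast
  have "(\<lambda>k. (T i ^^ nk k) (S j k x) m) \<longlonglongrightarrow> (if i = j then x m else 0)"
    if i: "i \<in> {1..N}" and j: "j \<in> {1..N}" and x: "x \<in> X j" and T: "\<forall>y\<in>lp p. T i y \<in> lp p"
    for i j x m
  proof -
    have T_pow: "(T i ^^ n) y \<in> lp p" if "y \<in> lp p" for n y
      using that T by (induction n) auto
    have "x \<in> lp p"
      using dense j x by (auto simp: lp_dense_def)
    then have "(\<lambda>n. if i = j then x n else 0) \<in> lp p"
      by (cases "i = j") (simp_all add: lp_def)
    then have "(\<lambda>n. (T i ^^ nk k) (S j k x) n - (if i = j then x n else 0)) \<in> lp p" for k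
      using T_pow S_lp j x assms(2) by (intro lp_diff) auto
    then have "(\<lambda>k. (T i ^^ nk k) (S j k x) m - (if i = j then x m else 0)) \<longlonglongrightarrow> 0"
      using conv i j x assms(2)
      by (intro tendsto_coordinate_if_lpnorm_tendsto_0[where h = "\<lambda>k n. _ k n - (if i = j then x n else 0)"]) auto
    then show ?thesis
      by (simp add: LIM_zero_iff)
  qed
  moreover have "\<forall>j\<in>{1..N}. lp_dense p (X j)"
    using dense by auto
  ultimately show ?thesis
    using that by blast
qed

lemma not_DHC_if_shared_pseudo_shift:
  fixes T :: "nat \<Rightarrow> (nat \<Rightarrow> 'a::real_normed_field) \<Rightarrow> (nat \<Rightarrow> 'a)"
  assumes "p > 0" and i: "i \<in> {1..N}" and l: "l \<in> {1..N}" and "i \<noteq> l"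
    and "T i = pseudo_shift g a" "T l = pseudo_shift g b"
    and g: "inj g" and a: "bounded (range a)" and b: "bounded (range b)"
  shows "\<not> DHC p N T"
proof
  assume "DHC p N T"
  obtain X nk S where dense: "\<forall>j\<in>{1..N}. lp_dense p (X j)"
    and lim: "\<And>i j x m. i \<in> {1..N} \<Longrightarrow> j \<in> {1..N} \<Longrightarrow> x \<in> X j \<Longrightarrow> \<forall>y\<in>lp p. T i y \<in> lp p \<Longrightarrow>
           (\<lambda>k. (T i ^^ nk k) (S j k x) m) \<longlonglongrightarrow> (if i = j then x m else 0)"
    using DHC_imp_coordinatewise[OF \<open>DHC p N T\<close> assms(1)] by blast
  have Ti: "\<forall>y\<in>lp p. T i y \<in> lp p"
    using pseudo_shift_in_lp[OF _ assms(1) g a] assms(5) by simp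
  have Tl: "\<forall>y\<in>lp p. T l y \<in> lp p"
    using pseudo_shift_in_lp[OF _ assms(1) g b] assms(6) by simp
  obtain x where x: "x \<in> X i" "x 0 \<noteq> 0"
    using dense i assms(1) by (meson lp_dense_obtain_nonzero)
  obtain z where z: "z \<in> X l" "z 0 \<noteq> 0"
    using dense l assms(1) by (meson lp_dense_obtain_nonzero)
  have "(\<lambda>k. (T i ^^ nk k) (S i k x) 0 * (T l ^^ nk k) (S l k z) 0) \<longlonglongrightarrow> x 0 * z 0"
    using lim[OF i i x(1) Ti] lim[OF l l z(1) Tl] by (intro tendsto_mult) simp_all
  moreover have "(\<lambda>k. (T l ^^ nk k) (S i k x) 0 * (T i ^^ nk k) (S l k z) 0) \<longlonglongrightarrow> 0 * 0"
    using lim[OF l i x(1) Tl] lim[OF i l z(1) Ti] \<open>i \<noteq> l\<close> by (intro tendsto_mult) simp_all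
  ultimately have "x 0 * z 0 = 0 * 0"
    unfolding assms(5,6) funpow_pseudo_shift_cross[where a = a and b = b] by (rule LIMSEQ_unique)
  with x z show False
    by simp
qed

lemma backward_shift_eq_pseudo_shift: "backward_shift v = pseudo_shift Suc v"
  by (simp add: fun_eq_iff backward_shift_def pseudo_shift_def)

theorem corollary2p9:
  fixes p :: real and N :: nat
    and f :: "nat \<Rightarrow> nat \<Rightarrow> nat" and w :: "nat \<Rightarrow> nat \<Rightarrow> 'a::real_normed_field"
  assumes "1 \<le> p" and "2 \<le> N"
    and "\<forall>i\<in>{1..N}. pseudo_shift_data (f i) (w i)"
  shows "((\<exists>i\<in>{1..N}. \<exists>l\<in>{1..N}. i \<noteq> l \<and> f i = f l)
            \<longrightarrow> \<not> DHC p N (\<lambda>i. pseudo_shift (f i) (w i)))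
    \<and> (\<forall>v :: nat \<Rightarrow> nat \<Rightarrow> 'a. (\<forall>i\<in>{1..N}. bounded (range (v i)) \<and> (\<forall>m. v i m \<noteq> 0))
            \<longrightarrow> \<not> DHC p N (\<lambda>i. backward_shift (v i)))"
proof (intro conjI impI allI)
  assume "\<exists>i\<in>{1..N}. \<exists>l\<in>{1..N}. i \<noteq> l \<and> f i = f l"
  then obtain i l where il: "i \<in> {1..N}" "l \<in> {1..N}" "i \<noteq> l" "f i = f l"
    by blast
  moreover have "inj (f i)" "bounded (range (w i))" "bounded (range (w l))"
    using assms(3) il by (auto simp: pseudo_shift_data_def strict_mono_imp_inj_on)
  ultimately show "\<not> DHC p N (\<lambda>i. pseudo_shift (f i) (w i))"
    using assms(1) by (intro not_DHC_if_shared_pseudo_shift[of p i N l _ "f i" "w i" "w l"]) auto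
next
  fix v :: "nat \<Rightarrow> nat \<Rightarrow> 'a"
  assume "\<forall>i\<in>{1..N}. bounded (range (v i)) \<and> (\<forall>m. v i m \<noteq> 0)"
  then show "\<not> DHC p N (\<lambda>i. backward_shift (v i))"
    using assms(1,2) unfolding backward_shift_eq_pseudo_shift
    by (intro not_DHC_if_shared_pseudo_shift[of p 1 N 2 _ Suc "v 1" "v 2"]) auto
qed

end
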